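(* Let $\lambda\in\mathbb{C}$ with $|\lambda|\neq 0,1$, let $l\ge 0$, and let $\Lambda$ be the $(l+1)\times(l+1)$ matrix with all diagonal entries equal to $\lambda$, all entries directly below the diagonal equal to $1$, and all other entries $0$. Let $S$ be a set with a bijection $R\colon S\to S$, and let $h\colon S\to\mathbb{C}^{l+1}$ be a function such that $\|h\circ R-\Lambda^{-1}h\|$ is bounded on $S$. Then there is a unique function $\widehat{h}\colon S\to\mathbb{C}^{l+1}$ satisfying $\widehat h\circ R=\Lambda^{-1}\widehat h$ and such that $\|\widehat h-h\|$ is bounded on $S$.
   Context: $\|\cdot\|$ denotes the sup norm on $\mathbb{C}^{l+1}$: $\|(a_0,\dots,a_l)\|=\max_i|a_i|$. *)

theory Defs
  imports Complex_Main "Jordan_Normal_Form.Gauss_Jordan_Elimination"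
begin

text \<open>Sup norm on complex vectors (elements of C^{l+1} represented as vectors of dimension l+1).\<close>
definition supnorm :: "complex vec \<Rightarrow> real" where
  "supnorm v = Max ((\<lambda>i. cmod (v $ i)) ` {..<dim_vec v})"

definition Lambda_mat :: "complex \<Rightarrow> nat \<Rightarrow> complex mat" where
  "Lambda_mat lam l = mat (l+1) (l+1)
     (\<lambda>(i,j). if i = j then lam else if i = j + 1 then 1 else 0)"

text \<open>Its inverse (computed via Gauss-Jordan; exists since lam is nonzero).\<close>
definition Lambda_inv :: "complex \<Rightarrow> nat \<Rightarrow> complex mat" where
  "Lambda_inv lam l = the (mat_inverse (Lambda_mat lam l))"

end

(* Since Lambda is lower triangular with diagonal lam, the equation hh o R = Lambda^-1 hh, that is
   Lambda (hh o R) = hh, reads coordinatewise  hh_k = lam (hh_k o R) + hh_(k-1) o R.  For a scalar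
   equation u = lam (u o R) + f with bounded f there is exactly one bounded solution: the geometric
   series  sum_n lam^n f o R^n  if norm lam < 1, and the analogous series in inverse lam along the
   inverse of R if norm lam > 1.  Writing hh = h + G and solving for the coordinates of G in the
   order k = 0, ..., l gives existence; the difference of two solutions solves the homogeneous
   system, whose bounded solutions vanish coordinate by coordinate. *)
theory Submission
  imports Defs "Jordan_Normal_Form.Determinant"
begin

definition bounded_fun :: "('s \<Rightarrow> 'a::real_normed_vector) \<Rightarrow> bool" where
  "bounded_fun u \<longleftrightarrow> (\<exists>B. \<forall>s. norm (u s) \<le> B)"

lemma bounded_funI: "(\<And>s. norm (u s) \<le> B) \<Longrightarrow> bounded_fun u"
  unfolding bounded_fun_def by blast

lemma bounded_fun_add: "bounded_fun u \<Longrightarrow> bounded_fun v \<Longrightarrow> bounded_fun (\<lambda>s. u s + v s)"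
  unfolding bounded_fun_def by (metis add_mono norm_triangle_le)

lemma bounded_fun_mult_left:
  fixes c :: "'a::real_normed_div_algebra"
  assumes "bounded_fun u"
  shows "bounded_fun (\<lambda>s. c * u s)"
proof -
  obtain B where "\<And>s. norm (u s) \<le> B"
    using assms unfolding bounded_fun_def by blast
  then have "norm (c * u s) \<le> norm c * B" for s
    by (simp add: norm_mult mult_left_mono)
  then show ?thesis by (rule bounded_funI)
qed

lemma bounded_fun_comp: "bounded_fun u \<Longrightarrow> bounded_fun (\<lambda>s. u (T s))"
  unfolding bounded_fun_def by blast

lemma bounded_solution_of_contraction:
  fixes c :: "'a::{banach,real_normed_div_algebra}"
  assumes c: "norm c < 1" and f: "bounded_fun f"
  shows "\<exists>u. bounded_fun u \<and> (\<forall>s. u s = c * u (T s) + f s)"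
proof -
  obtain B where fB: "\<And>s. norm (f s) \<le> B"
    using f unfolding bounded_fun_def by blast
  define g where "g s n = c ^ n * f ((T ^^ n) s)" for s n
  have g_le: "norm (g s n) \<le> B * norm c ^ n" for s n
  proof -
    have "norm c ^ n * norm (f ((T ^^ n) s)) \<le> norm c ^ n * B"
      using fB by (intro mult_left_mono) auto
    then show ?thesis by (simp add: g_def norm_mult norm_power mult.commute)
  qed
  have geometric: "summable (\<lambda>n. B * norm c ^ n)"
    using c by (intro summable_mult summable_geometric) auto
  have norm_summable: "summable (\<lambda>n. norm (g s n))" for s
    by (rule summable_comparison_test[OF _ geometric]) (use g_le in auto)
  then have summable: "summable (g s)" for s by (rule summable_norm_cancel)
  define u where "u s = suminf (g s)" for s
  have "u s = c * u (T s) + f s" for s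
  proof -
    have shift: "g s (Suc n) = c * g (T s) n" for n
      unfolding g_def by (simp add: funpow_swap1 mult.assoc)
    have "u s - f s = suminf (\<lambda>n. g s (Suc n))"
      unfolding u_def suminf_split_head[OF summable] by (simp add: g_def)
    also have "\<dots> = c * u (T s)"
      unfolding shift u_def by (rule suminf_mult[OF summable])
    finally show ?thesis by (simp add: algebra_simps)
  qed
  moreover have "norm (u s) \<le> (\<Sum>n. B * norm c ^ n)" for s
  proof -
    have "norm (u s) \<le> (\<Sum>n. norm (g s n))"
      unfolding u_def by (rule summable_norm[OF norm_summable])
    also have "\<dots> \<le> (\<Sum>n. B * norm c ^ n)"
      by (rule suminf_le[OF g_le norm_summable geometric])
    finally show ?thesis .
  qed
  ultimately show ?thesis unfolding bounded_fun_def by blast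
qed

lemma bounded_fixpoint_of_contraction_eq_0:
  fixes c :: "'a::real_normed_div_algebra"
  assumes c: "norm c < 1" and u: "bounded_fun u" and eq: "\<And>s. u s = c * u (T s)"
  shows "u s = 0"
proof -
  obtain B where uB: "\<And>s. norm (u s) \<le> B"
    using u unfolding bounded_fun_def by blast
  have iterate: "\<forall>s. norm (u s) \<le> norm c ^ n * B" for n
  proof (induction n)
    case (Suc n)
    have "norm (u s) \<le> norm c * (norm c ^ n * B)" for s
    proof -
      have "norm (u s) = norm c * norm (u (T s))"
        by (subst eq) (simp add: norm_mult)
      also have "\<dots> \<le> norm c * (norm c ^ n * B)"
        using Suc by (intro mult_left_mono) auto
      finally show ?thesis .
    qed
    then show ?case by (simp add: mult.assoc)
  qed (simp add: uB)
  have "(\<lambda>n. norm c ^ n * B) \<longlonglongrightarrow> 0"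
    using c by (intro tendsto_mult_left_zero LIMSEQ_power_zero) auto
  then have "norm (u s) \<le> 0"
    by (rule LIMSEQ_le_const) (use iterate in blast)
  then show ?thesis by simp
qed

(* For norm lam > 1 the equation is solved backwards along R, where it is a contraction with
   factor inverse lam. *)
lemma twisted_equation_iff_inv:
  fixes lam :: "'a::field"
  assumes "lam \<noteq> 0" and "bij R"
  shows "(\<forall>s. u s = lam * u (R s) + f s) \<longleftrightarrow>
         (\<forall>t. u t = inverse lam * u (inv_into UNIV R t) - inverse lam * f (inv_into UNIV R t))"
proof -
  have "(\<forall>s. u s = lam * u (R s) + f s) \<longleftrightarrow>
      (\<forall>t. u (inv_into UNIV R t) = lam * u t + f (inv_into UNIV R t))"
    using assms(2) by (metis bij_is_inj bij_is_surj inv_into_f_f surj_f_inv_f UNIV_I)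
  moreover have "a = lam * b + c \<longleftrightarrow> b = inverse lam * a - inverse lam * c" for a b c :: 'a
    using assms(1) by (auto simp: field_simps)
  ultimately show ?thesis by (simp only:)
qed

lemma bounded_solution_exists:
  fixes lam :: "'a::{banach,real_normed_field}"
  assumes "lam \<noteq> 0" and "norm lam \<noteq> 1" and "bij R" and f: "bounded_fun f"
  shows "\<exists>u. bounded_fun u \<and> (\<forall>s. u s = lam * u (R s) + f s)"
proof (cases "norm lam < 1")
  case True
  then show ?thesis by (rule bounded_solution_of_contraction[OF _ f])
next
  case False
  then have "norm (inverse lam) < 1"
    using assms(2) by (simp add: norm_inverse inverse_less_1_iff)
  moreover have "bounded_fun (\<lambda>t. - inverse lam * f (inv_into UNIV R t))"
    using f by (rule bounded_fun_mult_left[OF bounded_fun_comp])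
  ultimately obtain u where "bounded_fun u"
    and "\<forall>t. u t = inverse lam * u (inv_into UNIV R t) + - inverse lam * f (inv_into UNIV R t)"
    using bounded_solution_of_contraction by blast
  then show ?thesis
    unfolding twisted_equation_iff_inv[OF assms(1,3)] by auto
qed

lemma bounded_solution_homogeneous_eq_0:
  fixes lam :: "'a::{banach,real_normed_field}"
  assumes "lam \<noteq> 0" and "norm lam \<noteq> 1" and "bij R"
    and u: "bounded_fun u" and eq: "\<forall>s. u s = lam * u (R s)"
  shows "u s = 0"
proof (cases "norm lam < 1")
  case True
  then show ?thesis by (rule bounded_fixpoint_of_contraction_eq_0[OF _ u eq[rule_format]])
next
  case False
  have "(\<forall>s. u s = lam * u (R s)) \<longleftrightarrow> (\<forall>t. u t = inverse lam * u (inv_into UNIV R t))"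
    using twisted_equation_iff_inv[OF assms(1,3), of u "\<lambda>_. 0"] by simp
  with eq have "\<forall>t. u t = inverse lam * u (inv_into UNIV R t)" by blast
  moreover have "norm (inverse lam) < 1"
    using False assms(2) by (simp add: norm_inverse inverse_less_1_iff)
  ultimately show ?thesis
    using bounded_fixpoint_of_contraction_eq_0[OF _ u] by blast
qed

lemma triangular_bounded_solution_exists:
  fixes lam :: "'a::{banach,real_normed_field}" and n :: nat
  assumes "lam \<noteq> 0" and "norm lam \<noteq> 1" and "bij R"
    and "\<forall>k<n. bounded_fun (f k)"
  shows "\<exists>G. \<forall>k<n. bounded_fun (G k) \<and>
           (\<forall>s. G k s = lam * G k (R s) + ((if k = 0 then 0 else G (k - 1) (R s)) + f k s))"
  using assms(4)
proof (induction n)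
  case (Suc n)
  then obtain G where G: "\<forall>k<n. bounded_fun (G k) \<and>
      (\<forall>s. G k s = lam * G k (R s) + ((if k = 0 then 0 else G (k - 1) (R s)) + f k s))"
    by auto
  have "bounded_fun (\<lambda>s. (if n = 0 then 0 else G (n - 1) (R s)) + f n s)"
  proof (cases "n = 0")
    case False
    then have "n - 1 < n" by simp
    then have "bounded_fun (G (n - 1))" using G by blast
    then have "bounded_fun (\<lambda>s. G (n - 1) (R s) + f n s)"
      using Suc.prems by (intro bounded_fun_add[OF bounded_fun_comp]) auto
    then show ?thesis using False by simp
  qed (use Suc.prems in simp)
  then obtain u where u: "bounded_fun u"
    "\<forall>s. u s = lam * u (R s) + ((if n = 0 then 0 else G (n - 1) (R s)) + f n s)"
    using bounded_solution_exists[OF assms(1-3)] by blast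
  have "bounded_fun ((G(n := u)) k) \<and> (\<forall>s. (G(n := u)) k s =
      lam * (G(n := u)) k (R s) + ((if k = 0 then 0 else (G(n := u)) (k - 1) (R s)) + f k s))"
    if "k < Suc n" for k
  proof (cases "k = n")
    case True
    have upd: "(if n = 0 then 0 else (G(n := u)) (n - 1) t) = (if n = 0 then 0 else G (n - 1) t)"
      for t by auto
    show ?thesis unfolding True fun_upd_same upd using u by (rule conjI)
  next
    case False
    with that have "k < n" by simp
    have upd: "(G(n := u)) k = G k" "(G(n := u)) (k - 1) = G (k - 1)"
      using False \<open>k < n\<close> by auto
    show ?thesis unfolding upd using G \<open>k < n\<close> by blast
  qed
  then show ?case by blast
qed simp

lemma triangular_bounded_solution_homogeneous_eq_0:
  fixes lam :: "'a::{banach,real_normed_field}" and n k :: nat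
  assumes "lam \<noteq> 0" and "norm lam \<noteq> 1" and "bij R"
    and G: "\<forall>k<n. bounded_fun (G k) \<and>
             (\<forall>s. G k s = lam * G k (R s) + (if k = 0 then 0 else G (k - 1) (R s)))"
    and "k < n"
  shows "G k s = 0"
  using \<open>k < n\<close>
proof (induction k arbitrary: s rule: less_induct)
  case (less k)
  have "G k s = lam * G k (R s)" for s
  proof -
    have "G k s = lam * G k (R s) + (if k = 0 then 0 else G (k - 1) (R s))"
      using G less.prems by blast
    moreover have "(if k = 0 then 0 else G (k - 1) (R s)) = 0"
      using less.IH less.prems by simp
    ultimately show ?thesis by simp
  qed
  moreover have "bounded_fun (G k)" using G less.prems by blast
  ultimately show ?case
    using bounded_solution_homogeneous_eq_0[OF assms(1-3)] by blast
qed

lemma Lambda_mat_carrier: "Lambda_mat lam l \<in> carrier_mat (l + 1) (l + 1)"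
  unfolding Lambda_mat_def by auto

lemma det_Lambda_mat: "det (Lambda_mat lam l) = lam ^ (l + 1)"
proof -
  have "diag_mat (Lambda_mat lam l) = replicate (l + 1) lam"
    by (rule nth_equalityI) (auto simp: diag_mat_def Lambda_mat_def simp del: upt_Suc replicate_Suc)
  moreover have "det (Lambda_mat lam l) = prod_list (diag_mat (Lambda_mat lam l))"
    by (rule det_lower_triangular[OF _ Lambda_mat_carrier]) (auto simp: Lambda_mat_def)
  ultimately show ?thesis by simp
qed

lemma Lambda_inv_inverse:
  assumes "lam \<noteq> 0"
  shows "Lambda_inv lam l \<in> carrier_mat (l + 1) (l + 1)"
    and "Lambda_mat lam l * Lambda_inv lam l = 1\<^sub>m (l + 1)"
    and "Lambda_inv lam l * Lambda_mat lam l = 1\<^sub>m (l + 1)"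
proof -
  have "Lambda_mat lam l \<in> Units (ring_mat TYPE(complex) (l + 1) undefined)"
    using assms by (intro det_non_zero_imp_unit[OF Lambda_mat_carrier]) (simp add: det_Lambda_mat)
  then obtain B where "mat_inverse (Lambda_mat lam l) = Some B"
    using mat_inverse(1)[OF Lambda_mat_carrier, where b = undefined] by fastforce
  then show "Lambda_inv lam l \<in> carrier_mat (l + 1) (l + 1)"
    and "Lambda_mat lam l * Lambda_inv lam l = 1\<^sub>m (l + 1)"
    and "Lambda_inv lam l * Lambda_mat lam l = 1\<^sub>m (l + 1)"
    using mat_inverse(2)[OF Lambda_mat_carrier] unfolding Lambda_inv_def by auto
qed

lemma dim_row_Lambda_inv: "lam \<noteq> 0 \<Longrightarrow> dim_row (Lambda_inv lam l) = l + 1"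
  using Lambda_inv_inverse(1) by blast

lemma Lambda_mat_mult_vec_index:
  assumes "dim_vec v = l + 1" and "k < l + 1"
  shows "(Lambda_mat lam l *\<^sub>v v) $ k = lam * v $ k + (if k = 0 then 0 else v $ (k - 1))"
proof -
  have "(Lambda_mat lam l *\<^sub>v v) $ k =
      (\<Sum>j<l + 1. (if k = j then lam else if k = j + 1 then 1 else 0) * v $ j)"
    using assms unfolding Lambda_mat_def mult_mat_vec_def scalar_prod_def
    by (auto simp: atLeast0LessThan intro!: sum.cong)
  also have "\<dots> = (\<Sum>j<l + 1. (if j = k then lam * v $ k else 0) +
      (if k \<noteq> 0 \<and> j = k - 1 then v $ j else 0))"
    by (intro sum.cong) auto
  also have "\<dots> = lam * v $ k + (if k = 0 then 0 else v $ (k - 1))"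
    using assms by (simp add: sum.distrib; arith)
  finally show ?thesis .
qed

lemma Lambda_inv_mult_vec_eq_iff:
  assumes "lam \<noteq> 0" and x: "dim_vec x = l + 1" and y: "dim_vec y = l + 1"
  shows "y = Lambda_inv lam l *\<^sub>v x \<longleftrightarrow>
         (\<forall>k<l + 1. x $ k = lam * y $ k + (if k = 0 then 0 else y $ (k - 1)))"
proof -
  note inverse = Lambda_inv_inverse[OF assms(1), of l]
  have xc: "x \<in> carrier_vec (l + 1)" and yc: "y \<in> carrier_vec (l + 1)"
    using x y by (auto intro: carrier_vecI)
  have "Lambda_mat lam l *\<^sub>v (Lambda_inv lam l *\<^sub>v x) = x"
    using xc by (simp add: assoc_mult_mat_vec[OF Lambda_mat_carrier inverse(1), symmetric] inverse(2))
  moreover have "Lambda_inv lam l *\<^sub>v (Lambda_mat lam l *\<^sub>v y) = y"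
    using yc by (simp add: assoc_mult_mat_vec[OF inverse(1) Lambda_mat_carrier, symmetric] inverse(3))
  ultimately have "y = Lambda_inv lam l *\<^sub>v x \<longleftrightarrow> Lambda_mat lam l *\<^sub>v y = x"
    by metis
  also have "\<dots> \<longleftrightarrow> (\<forall>k<l + 1. (Lambda_mat lam l *\<^sub>v y) $ k = x $ k)"
    using x by (auto simp: Lambda_mat_def intro!: eq_vecI)
  also have "\<dots> \<longleftrightarrow> (\<forall>k<l + 1. x $ k = lam * y $ k + (if k = 0 then 0 else y $ (k - 1)))"
    using Lambda_mat_mult_vec_index[OF y] by auto
  finally show ?thesis .
qed

lemma norm_vec_index_le_supnorm: "i < dim_vec v \<Longrightarrow> cmod (v $ i) \<le> supnorm v"
  unfolding supnorm_def by (rule Max_ge) auto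

lemma supnorm_le:
  "0 < dim_vec v \<Longrightarrow> (\<And>i. i < dim_vec v \<Longrightarrow> cmod (v $ i) \<le> B) \<Longrightarrow> supnorm v \<le> B"
  unfolding supnorm_def by (subst Max_le_iff) auto

lemma supnorm_diff_le:
  assumes "dim_vec u = dim_vec v" and "0 < dim_vec v"
  shows "supnorm (u - v) \<le> supnorm u + supnorm v"
proof (rule supnorm_le)
  fix i assume "i < dim_vec (u - v)"
  then have "i < dim_vec u" "i < dim_vec v" using assms by auto
  then have "cmod (u $ i - v $ i) \<le> supnorm u + supnorm v"
    by (intro norm_triangle_le_diff add_mono norm_vec_index_le_supnorm)
  then show "cmod ((u - v) $ i) \<le> supnorm u + supnorm v"
    using \<open>i < dim_vec v\<close> by simp
qed (use assms in simp)

lemma bounded_supnorm_iff_bounded_components: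
  assumes dim: "\<And>s. dim_vec (v s) = n" and "0 < n"
  shows "(\<exists>B. \<forall>s. supnorm (v s) \<le> B) \<longleftrightarrow> (\<forall>k<n. bounded_fun (\<lambda>s. v s $ k))"
proof
  assume "\<exists>B. \<forall>s. supnorm (v s) \<le> B"
  then obtain B where B: "\<And>s. supnorm (v s) \<le> B" by blast
  have "cmod (v s $ k) \<le> supnorm (v s)" if "k < n" for s k
    using dim that by (intro norm_vec_index_le_supnorm) simp
  then show "\<forall>k<n. bounded_fun (\<lambda>s. v s $ k)"
    unfolding bounded_fun_def using B by (meson order_trans)
next
  assume "\<forall>k<n. bounded_fun (\<lambda>s. v s $ k)"
  then obtain B where B: "\<And>k s. k < n \<Longrightarrow> cmod (v s $ k) \<le> B k"
    unfolding bounded_fun_def by metis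
  have "supnorm (v s) \<le> Max (B ` {..<n})" for s
    using dim \<open>0 < n\<close> by (intro supnorm_le) (auto intro: order_trans[OF B] Max_ge)
  then show "\<exists>B. \<forall>s. supnorm (v s) \<le> B" by blast
qed

lemma bounded_supnorm_dist_trans:
  assumes "\<And>s. dim_vec (u s) = n" and "\<And>s. dim_vec (v s) = n" and "\<And>s. dim_vec (w s) = n"
    and "0 < n"
    and "\<exists>B. \<forall>s. supnorm (u s - w s) \<le> B" and "\<exists>B. \<forall>s. supnorm (v s - w s) \<le> B"
  shows "\<exists>B. \<forall>s. supnorm (u s - v s) \<le> B"
proof -
  obtain B1 B2 where B1: "\<And>s. supnorm (u s - w s) \<le> B1" and B2: "\<And>s. supnorm (v s - w s) \<le> B2"
    using assms(5,6) by blast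
  have "supnorm (u s - v s) \<le> B1 + B2" for s
  proof -
    have "u s - v s = (u s - w s) - (v s - w s)"
      by (rule eq_vecI) (simp_all add: assms(1-3))
    also have "supnorm \<dots> \<le> supnorm (u s - w s) + supnorm (v s - w s)"
      by (rule supnorm_diff_le) (simp_all add: assms(1-4))
    also have "\<dots> \<le> B1 + B2"
      using B1 B2 by (rule add_mono)
    finally show ?thesis .
  qed
  then show ?thesis by blast
qed

lemma ex_equivariant_within_bounded_distance:
  fixes h :: "'s \<Rightarrow> complex vec"
  assumes lam: "lam \<noteq> 0" "cmod lam \<noteq> 1" and R: "bij R"
    and dim: "\<And>s. dim_vec (h s) = l + 1"
    and defect: "\<exists>B. \<forall>s. supnorm (h (R s) - Lambda_inv lam l *\<^sub>v h s) \<le> B"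
  shows "\<exists>hh. (\<forall>s. dim_vec (hh s) = l + 1) \<and> (\<forall>s. hh (R s) = Lambda_inv lam l *\<^sub>v hh s) \<and>
           (\<exists>B. \<forall>s. supnorm (hh s - h s) \<le> B)"
proof -
  define e where "e s = h (R s) - Lambda_inv lam l *\<^sub>v h s" for s
  have dim_e: "dim_vec (e s) = l + 1" for s
    using lam(1) by (simp add: e_def dim dim_row_Lambda_inv)
  have e_bounded: "\<forall>k<l + 1. bounded_fun (\<lambda>s. e s $ k)"
    using bounded_supnorm_iff_bounded_components[of e, OF dim_e] defect unfolding e_def by simp
  (* f k s is coordinate k of Lambda_mat lam l *\<^sub>v e s, the forcing term for hh - h. *)
  define f where "f k = (\<lambda>s. lam * e s $ k + (if k = 0 then 0 else e s $ (k - 1)))" for k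
  have "bounded_fun (f k)" if "k < l + 1" for k
  proof (cases "k = 0")
    case False
    then have "bounded_fun (\<lambda>s. lam * e s $ k + e s $ (k - 1))"
      using e_bounded that by (intro bounded_fun_add bounded_fun_mult_left) auto
    then show ?thesis using False by (simp add: f_def)
  qed (use e_bounded that in \<open>simp add: f_def bounded_fun_mult_left\<close>)
  then obtain G where G: "\<forall>k<l + 1. bounded_fun (G k) \<and>
      (\<forall>s. G k s = lam * G k (R s) + ((if k = 0 then 0 else G (k - 1) (R s)) + f k s))"
    using triangular_bounded_solution_exists[OF lam R] by blast
  define hh where "hh s = h s + vec (l + 1) (\<lambda>k. G k s)" for s
  have dim_hh: "dim_vec (hh s) = l + 1" for s
    by (simp add: hh_def)
  have "hh (R s) = Lambda_inv lam l *\<^sub>v hh s" for s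
    unfolding Lambda_inv_mult_vec_eq_iff[OF lam(1) dim_hh dim_hh]
  proof (intro allI impI)
    fix k assume k: "k < l + 1"
    have "h (R s) - e s = Lambda_inv lam l *\<^sub>v h s"
      by (rule eq_vecI) (simp_all add: e_def dim dim_e[unfolded e_def])
    then have "h s $ k = lam * (h (R s) - e s) $ k + (if k = 0 then 0 else (h (R s) - e s) $ (k - 1))"
      using k by (subst (asm) Lambda_inv_mult_vec_eq_iff[OF lam(1) dim]) (simp_all add: dim_e)
    moreover have "G k s = lam * G k (R s) + ((if k = 0 then 0 else G (k - 1) (R s)) + f k s)"
      using G k by blast
    ultimately show "hh s $ k = lam * hh (R s) $ k + (if k = 0 then 0 else hh (R s) $ (k - 1))"
      using k by (cases "k = 0") (simp_all add: hh_def dim dim_e f_def algebra_simps)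
  qed
  moreover have "\<exists>B. \<forall>s. supnorm (hh s - h s) \<le> B"
  proof -
    have "(\<lambda>s. (hh s - h s) $ k) = G k" if "k < l + 1" for k
      using that by (auto simp: hh_def dim)
    moreover have "\<forall>k<l + 1. bounded_fun (G k)"
      using G by blast
    ultimately show ?thesis
      by (subst bounded_supnorm_iff_bounded_components[where n = "l + 1"]) (simp_all add: dim_hh dim)
  qed
  ultimately show ?thesis using dim_hh by blast
qed

lemma equivariant_eq_of_bounded_distance:
  fixes h1 h2 :: "'s \<Rightarrow> complex vec"
  assumes lam: "lam \<noteq> 0" "cmod lam \<noteq> 1" and R: "bij R"
    and dim1: "\<And>s. dim_vec (h1 s) = l + 1" and dim2: "\<And>s. dim_vec (h2 s) = l + 1"
    and eq1: "\<And>s. h1 (R s) = Lambda_inv lam l *\<^sub>v h1 s"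
    and eq2: "\<And>s. h2 (R s) = Lambda_inv lam l *\<^sub>v h2 s"
    and distance: "\<exists>B. \<forall>s. supnorm (h1 s - h2 s) \<le> B"
  shows "h1 = h2"
proof -
  define D where "D k = (\<lambda>s. h1 s $ k - h2 s $ k)" for k
  have "\<forall>k<l + 1. bounded_fun (\<lambda>s. (h1 s - h2 s) $ k)"
    using bounded_supnorm_iff_bounded_components[of "\<lambda>s. h1 s - h2 s" "l + 1"] distance dim1 dim2 by simp
  moreover have "(\<lambda>s. (h1 s - h2 s) $ k) = D k" if "k < l + 1" for k
    using that by (auto simp: D_def dim2)
  ultimately have "bounded_fun (D k) \<and>
      (\<forall>s. D k s = lam * D k (R s) + (if k = 0 then 0 else D (k - 1) (R s)))"
    if k: "k < l + 1" for k
  proof (intro conjI allI)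
    fix s
    have "h1 s $ k = lam * h1 (R s) $ k + (if k = 0 then 0 else h1 (R s) $ (k - 1))"
      using eq1[of s] k unfolding Lambda_inv_mult_vec_eq_iff[OF lam(1) dim1 dim1] by blast
    moreover have "h2 s $ k = lam * h2 (R s) $ k + (if k = 0 then 0 else h2 (R s) $ (k - 1))"
      using eq2[of s] k unfolding Lambda_inv_mult_vec_eq_iff[OF lam(1) dim2 dim2] by blast
    ultimately show "D k s = lam * D k (R s) + (if k = 0 then 0 else D (k - 1) (R s))"
      by (simp add: D_def algebra_simps)
  qed (use k in simp_all)
  then have "D k s = 0" if "k < l + 1" for k s
    using triangular_bounded_solution_homogeneous_eq_0[OF lam R] that by blast
  then have "h1 s = h2 s" for s
    by (intro eq_vecI) (simp_all add: D_def dim1 dim2)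
  then show ?thesis by blast
qed

theorem proposition3p2:
  fixes lam :: complex and l :: nat and R :: "'s \<Rightarrow> 's" and h :: "'s \<Rightarrow> complex vec"
  assumes "cmod lam \<noteq> 0" and "cmod lam \<noteq> 1"
    and "bij R"
    and "\<forall>s. dim_vec (h s) = l + 1"
    and "\<exists>B. \<forall>s. supnorm (h (R s) - Lambda_inv lam l *\<^sub>v h s) \<le> B"
  shows "\<exists>!hh :: 's \<Rightarrow> complex vec.
           (\<forall>s. dim_vec (hh s) = l + 1) \<and>
           (\<forall>s. hh (R s) = Lambda_inv lam l *\<^sub>v hh s) \<and>
           (\<exists>B. \<forall>s. supnorm (hh s - h s) \<le> B)"
proof (rule ex_ex1I)
  have lam: "lam \<noteq> 0" "cmod lam \<noteq> 1" using assms(1,2) by auto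
  have dim: "\<And>s. dim_vec (h s) = l + 1" using assms(4) by blast
  show "\<exists>hh. (\<forall>s. dim_vec (hh s) = l + 1) \<and> (\<forall>s. hh (R s) = Lambda_inv lam l *\<^sub>v hh s) \<and>
      (\<exists>B. \<forall>s. supnorm (hh s - h s) \<le> B)"
    by (rule ex_equivariant_within_bounded_distance[OF lam assms(3) dim assms(5)])
  fix h1 h2
  assume "(\<forall>s. dim_vec (h1 s) = l + 1) \<and> (\<forall>s. h1 (R s) = Lambda_inv lam l *\<^sub>v h1 s) \<and>
      (\<exists>B. \<forall>s. supnorm (h1 s - h s) \<le> B)"
    and "(\<forall>s. dim_vec (h2 s) = l + 1) \<and> (\<forall>s. h2 (R s) = Lambda_inv lam l *\<^sub>v h2 s) \<and>
      (\<exists>B. \<forall>s. supnorm (h2 s - h s) \<le> B)"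
  then have dim1: "\<And>s. dim_vec (h1 s) = l + 1" and dim2: "\<And>s. dim_vec (h2 s) = l + 1"
    and eq1: "\<And>s. h1 (R s) = Lambda_inv lam l *\<^sub>v h1 s" and eq2: "\<And>s. h2 (R s) = Lambda_inv lam l *\<^sub>v h2 s"
    and near1: "\<exists>B. \<forall>s. supnorm (h1 s - h s) \<le> B" and near2: "\<exists>B. \<forall>s. supnorm (h2 s - h s) \<le> B"
    by blast+
  have "\<exists>B. \<forall>s. supnorm (h1 s - h2 s) \<le> B"
    by (rule bounded_supnorm_dist_trans[OF dim1 dim2 dim _ near1 near2]) simp
  then show "h1 = h2"
    by (rule equivariant_eq_of_bounded_distance[of lam R h1 l h2, OF lam assms(3) dim1 dim2 eq1 eq2])
qed

end
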